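(* Consider the asynchronous $(n,k)$ game on the complete graph with agent set $[n]$ consisting of $n_r$ rejectors, $n_c$ consentors, and $n-n_r-n_c$ random followers, with $1\le n_c<k\le n-n_r$. Then almost surely a decision is made in finite time, i.e. almost surely there exists $t\ge 0$ with $\sum_{i\in[n]}x_i(t)\ge k$.
   Context: Each agent $i\in[n]$ holds an opinion $x_i(t)\in\{0,1\}$ at time $t=0,1,2,\dots$. The social graph is complete: every agent's social neighbors are all the other $n-1$ agents. In the $(n,k)$ game a decision is made at time $t$ if $\sum_{i\in[n]}x_i(t)\ge k$. The game is asynchronous: at each time step a single agent, chosen uniformly at random from $[n]$ (independently of the past), updates its opinion, and all other opinions stay the same. A rejector holds opinion $0$ at all times; a consentor holds opinion $1$ at all times. A random follower has initial opinion distributed as Bernoulli$(1/2)$ (independently across agents), and when it updates it adopts the current opinion of one of its social neighbors chosen uniformly at random. *)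

theory Defs
  imports "HOL-Probability.Probability"
begin

text \<open>Agents are 0,...,n-1. R = rejectors, C = consentors, the remaining agents
  of {..<n} are random followers.\<close>

definition followers :: "nat \<Rightarrow> nat set \<Rightarrow> nat set \<Rightarrow> nat set" where
  "followers n R C = {..<n} - R - C"

definition step_pmf :: "nat \<Rightarrow> (nat \<times> nat) pmf" where
  "step_pmf n = bind_pmf (pmf_of_set {..<n})
      (\<lambda>i. map_pmf (\<lambda>j. (i, j)) (pmf_of_set ({..<n} - {i})))"

definition init_pmf :: "nat \<Rightarrow> nat set \<Rightarrow> nat set \<Rightarrow> (nat \<Rightarrow> bool) pmf" where
  "init_pmf n R C = Pi_pmf (followers n R C) False (\<lambda>_. bernoulli_pmf (1/2))"

definition game_space :: "nat \<Rightarrow> nat set \<Rightarrow> nat set \<Rightarrow> ((nat \<Rightarrow> bool) \<times> (nat \<times> nat) stream) measure" where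
  "game_space n R C = measure_pmf (init_pmf n R C) \<Otimes>\<^sub>M stream_space (measure_pmf (step_pmf n))"

text \<open>Opinion of agent i at time t (True = opinion 1).\<close>
fun opinion :: "nat \<Rightarrow> nat set \<Rightarrow> nat set \<Rightarrow> (nat \<Rightarrow> bool) \<times> (nat \<times> nat) stream \<Rightarrow> nat \<Rightarrow> nat \<Rightarrow> bool" where
  "opinion n R C \<omega> 0 = (\<lambda>i. i \<in> C \<or> (i \<in> followers n R C \<and> fst \<omega> i))"
| "opinion n R C \<omega> (Suc t) =
     (let (i, j) = snd \<omega> !! t; x = opinion n R C \<omega> t
      in if i \<in> followers n R C then x(i := x j) else x)"

definition decision_at :: "nat \<Rightarrow> nat set \<Rightarrow> nat set \<Rightarrow> nat \<Rightarrow> (nat \<Rightarrow> bool) \<times> (nat \<times> nat) stream \<Rightarrow> nat \<Rightarrow> bool" where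
  "decision_at n R C k \<omega> t \<longleftrightarrow> (\<Sum>i<n. (if opinion n R C \<omega> t i then 1 else 0 :: nat)) \<ge> k"

end

theory Submission
  imports Defs
begin

(* Fix a consentor c and list the followers as f1, ..., fm. The block of m consecutive
   updates in which the r-th update lets fr copy c has some probability q > 0, so it occurs
   almost surely among the disjoint aligned blocks of the i.i.d. update stream: it is missed
   in the first B blocks with probability (1 - q)^B. Right after such a block every agent
   except the rejectors holds opinion 1, and there are n - |R| >= k of them. *)

lemma space_stream_space_pmf [simp]: "space (stream_space (measure_pmf p)) = UNIV"
  by (simp add: space_stream_space)

lemma prob_space_stream_space_pmf: "prob_space (stream_space (measure_pmf p))"
  by (rule prob_space.prob_space_stream_space[OF prob_space_measure_pmf])

lemma sets_stream_space_pmf_Collect: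
  "Measurable.pred (stream_space (measure_pmf p)) Q \<Longrightarrow>
    {\<omega>. Q \<omega>} \<in> sets (stream_space (measure_pmf p))"
  by (simp add: pred_def)

lemma measure_stream_space_pmf_stl:
  assumes [measurable]: "Measurable.pred (stream_space (measure_pmf p)) Q"
  shows "measure (stream_space (measure_pmf p)) {\<omega>. Q (stl \<omega>)}
    = measure (stream_space (measure_pmf p)) {\<omega>. Q \<omega>}"
proof -
  have [measurable]: "Measurable.pred (stream_space (measure_pmf p)) (\<lambda>\<omega>. Q (stl \<omega>))"
    by measurable
  have "ennreal (\<P>(\<omega> in stream_space (measure_pmf p). Q (stl \<omega>)))
      = (\<integral>\<^sup>+t. \<P>(\<omega> in stream_space (measure_pmf p). Q \<omega>) \<partial>measure_pmf p)"
    by (subst prob_space.prob_stream_space[OF prob_space_measure_pmf])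
      (simp_all add: sets_stream_space_pmf_Collect)
  then show ?thesis
    by simp
qed

lemma measure_stream_space_pmf_sdrop:
  assumes [measurable]: "Measurable.pred (stream_space (measure_pmf p)) Q"
  shows "measure (stream_space (measure_pmf p)) {\<omega>. Q (sdrop m \<omega>)}
    = measure (stream_space (measure_pmf p)) {\<omega>. Q \<omega>}"
proof (induction m)
  case (Suc m)
  have "Measurable.pred (stream_space (measure_pmf p)) (\<lambda>\<omega>. Q (sdrop m \<omega>))"
    by measurable
  from measure_stream_space_pmf_stl[OF this] Suc show ?case
    by simp
qed simp

lemma measure_stream_space_pmf_stake_sdrop:
  fixes p :: "'a::countable pmf"
  assumes [measurable]: "Measurable.pred (stream_space (measure_pmf p)) Q"
  shows "measure (stream_space (measure_pmf p))
      {\<omega>. stake (length xs) \<omega> = xs \<and> Q (sdrop (length xs) \<omega>)}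
    = (\<Prod>x\<leftarrow>xs. pmf p x) * measure (stream_space (measure_pmf p)) {\<omega>. Q \<omega>}"
proof (induction xs)
  case (Cons y xs)
  let ?P = "\<lambda>xs. \<P>(\<omega> in stream_space (measure_pmf p).
    stake (length xs) \<omega> = xs \<and> Q (sdrop (length xs) \<omega>))"
  have "ennreal (?P (y # xs)) = (\<integral>\<^sup>+t. indicator {y} t * ennreal (?P xs) \<partial>measure_pmf p)"
    by (subst prob_space.prob_stream_space[OF prob_space_measure_pmf])
      (auto simp: sets_stream_space_pmf_Collect intro!: nn_integral_cong split: split_indicator)
  also have "\<dots> = ennreal (pmf p y * ?P xs)"
    by (simp add: nn_integral_multc emeasure_pmf_single ennreal_mult')
  finally have "?P (y # xs) = pmf p y * ?P xs"
    by simp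
  with Cons show ?case
    by (simp add: mult.assoc)
qed simp

lemma measure_stream_space_pmf_no_block:
  fixes p :: "'a::countable pmf"
  shows "measure (stream_space (measure_pmf p))
      {\<omega>. \<forall>b<B. stake (length xs) (sdrop (b * length xs) \<omega>) \<noteq> xs}
    = (1 - (\<Prod>x\<leftarrow>xs. pmf p x)) ^ B"
proof (induction B)
  case 0
  interpret S: prob_space "stream_space (measure_pmf p)"
    by (rule prob_space_stream_space_pmf)
  show ?case
    using S.prob_space by simp
next
  case (Suc B)
  interpret S: prob_space "stream_space (measure_pmf p)"
    by (rule prob_space_stream_space_pmf)
  define L where "L = length xs"
  define Q where "Q \<omega> \<longleftrightarrow> (\<forall>b<B. stake L (sdrop (b * L) \<omega>) \<noteq> xs)" for \<omega>
  have [measurable]: "Measurable.pred (stream_space (measure_pmf p)) Q"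
    unfolding Q_def by measurable
  have "{\<omega>. \<forall>b<Suc B. stake L (sdrop (b * L) \<omega>) \<noteq> xs}
      = {\<omega>. Q (sdrop L \<omega>)} - {\<omega>. stake L \<omega> = xs \<and> Q (sdrop L \<omega>)}"
    unfolding Q_def by (auto simp: less_Suc_eq_0_disj add.commute)
  then have "\<P>(\<omega> in stream_space (measure_pmf p). \<forall>b<Suc B. stake L (sdrop (b * L) \<omega>) \<noteq> xs)
      = \<P>(\<omega> in stream_space (measure_pmf p). Q (sdrop L \<omega>))
        - \<P>(\<omega> in stream_space (measure_pmf p). stake L \<omega> = xs \<and> Q (sdrop L \<omega>))"
    by (simp add: S.finite_measure_Diff sets_stream_space_pmf_Collect subset_eq)
  also have "\<dots> = (1 - (\<Prod>x\<leftarrow>xs. pmf p x)) * \<P>(\<omega> in stream_space (measure_pmf p). Q \<omega>)"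
    unfolding L_def
    by (simp add: measure_stream_space_pmf_sdrop measure_stream_space_pmf_stake_sdrop left_diff_distrib)
  finally show ?case
    using Suc by (simp add: Q_def L_def)
qed

lemma AE_stream_space_pmf_block_eq:
  fixes p :: "'a::countable pmf"
  assumes "set xs \<subseteq> set_pmf p"
  shows "AE \<omega> in stream_space (measure_pmf p).
    \<exists>b. stake (length xs) (sdrop (b * length xs) \<omega>) = xs"
proof -
  interpret S: prob_space "stream_space (measure_pmf p)"
    by (rule prob_space_stream_space_pmf)
  define N where "N = {\<omega>. \<forall>b. stake (length xs) (sdrop (b * length xs) \<omega>) \<noteq> xs}"
  define q where "q = (\<Prod>x\<leftarrow>xs. pmf p x)"
  have N_sets: "N \<in> S.events"
    unfolding N_def by (rule sets_stream_space_pmf_Collect) measurable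
  have "0 < q"
    unfolding q_def using assms by (induction xs) (auto simp: pmf_positive)
  moreover have "q \<le> 1"
    unfolding q_def by (induction xs) (auto intro!: mult_le_one pmf_le_1 prod_list_nonneg)
  ultimately have "(\<lambda>B. (1 - q) ^ B) \<longlonglongrightarrow> 0"
    by (intro LIMSEQ_power_zero) simp
  moreover have "S.prob N \<le> (1 - q) ^ B" for B
  proof -
    have "S.prob N \<le> \<P>(\<omega> in stream_space (measure_pmf p).
        \<forall>b<B. stake (length xs) (sdrop (b * length xs) \<omega>) \<noteq> xs)"
      by (intro S.finite_measure_mono sets_stream_space_pmf_Collect) (auto simp: N_def)
    then show ?thesis
      by (simp add: measure_stream_space_pmf_no_block q_def)
  qed
  ultimately have "S.prob N \<le> 0"
    by (intro LIMSEQ_le_const) auto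
  then have "S.prob N = 0"
    by (simp add: order_antisym)
  then have "AE \<omega> in stream_space (measure_pmf p). \<omega> \<notin> N"
    using S.prob_eq_0[OF N_sets] by simp
  then show ?thesis
    by (simp add: N_def)
qed

lemma AE_pair_measure_snd:
  assumes "sigma_finite_measure M" and "sigma_finite_measure N"
    and [measurable]: "Measurable.pred N P" and "AE y in N. P y"
  shows "AE \<omega> in M \<Otimes>\<^sub>M N. P (snd \<omega>)"
proof -
  interpret pair_sigma_finite M N
    using assms(1,2) by (simp add: pair_sigma_finite_def)
  show ?thesis
    using assms(4) by (intro AE_pair_measure) simp_all
qed

lemma set_pmf_step_pmfI:
  assumes "i < n" and "j < n" and "i \<noteq> j"
  shows "(i, j) \<in> set_pmf (step_pmf n)"
proof -
  have "i \<in> set_pmf (pmf_of_set {..<n})" and "j \<in> set_pmf (pmf_of_set ({..<n} - {i}))"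
    using assms by (subst set_pmf_of_set; auto)+
  then show ?thesis
    by (auto simp: step_pmf_def)
qed

lemma opinion_consentor:
  assumes "c \<in> C"
  shows "opinion n R C \<omega> t c"
  using assms by (induction t) (auto simp: followers_def Let_def split: prod.splits)

lemma opinion_after_copy_block:
  assumes "c \<in> C" and "set fs \<subseteq> followers n R C"
    and "stake (length fs) (sdrop s (snd \<omega>)) = map (\<lambda>f. (f, c)) fs"
  shows "\<forall>f\<in>set fs. opinion n R C \<omega> (s + length fs) f"
  using assms(2,3)
proof (induction fs rule: rev_induct)
  case (snoc g fs)
  have "stake (length fs) (sdrop s (snd \<omega>)) @ [snd \<omega> !! (s + length fs)]
      = map (\<lambda>f. (f, c)) fs @ [(g, c)]"
    using snoc.prems(2)
    by (simp only: length_append_singleton stake_Suc sdrop_snth map_append list.map)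
  with snoc.prems(1) have "set fs \<subseteq> followers n R C"
    and "stake (length fs) (sdrop s (snd \<omega>)) = map (\<lambda>f. (f, c)) fs"
    and "snd \<omega> !! (s + length fs) = (g, c)" and "g \<in> followers n R C"
    by simp_all
  with snoc.IH opinion_consentor[OF assms(1)] show ?case
    by (simp add: Let_def)
qed simp

lemma decision_at_iff_card:
  "decision_at n R C k \<omega> t \<longleftrightarrow> k \<le> card {i. i < n \<and> opinion n R C \<omega> t i}"
  by (simp add: decision_at_def sum.If_cases Int_def lessThan_def)

lemma decision_at_if_followers_agree:
  assumes "R \<subseteq> {..<n}" and "k \<le> n - card R"
    and "\<forall>f\<in>followers n R C. opinion n R C \<omega> t f"
  shows "decision_at n R C k \<omega> t"
proof -
  have "{..<n} - R \<subseteq> {i. i < n \<and> opinion n R C \<omega> t i}"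
    using assms(3) opinion_consentor[where \<omega>=\<omega> and t=t] by (auto simp: followers_def)
  then have "card ({..<n} - R) \<le> card {i. i < n \<and> opinion n R C \<omega> t i}"
    by (intro card_mono) simp_all
  with assms(1,2) show ?thesis
    by (simp add: decision_at_iff_card card_Diff_subset finite_subset)
qed

theorem lemma3:
  fixes n k :: nat and R C :: "nat set"
  assumes "R \<subseteq> {..<n}" and "C \<subseteq> {..<n}" and "R \<inter> C = {}"
    and "1 \<le> card C" and "card C < k" and "k \<le> n - card R"
  shows "AE \<omega> in game_space n R C. \<exists>t. decision_at n R C k \<omega> t"
proof -
  obtain c where c: "c \<in> C"
    using assms(4) by fastforce
  define fs where "fs = sorted_list_of_set (followers n R C)"
  define block where "block = map (\<lambda>f. (f, c)) fs"
  have set_fs: "set fs = followers n R C"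
    by (simp add: fs_def followers_def)
  have "set block \<subseteq> set_pmf (step_pmf n)"
    using set_fs c assms(2) by (auto simp: block_def followers_def intro!: set_pmf_step_pmfI)
  then have "AE s in stream_space (measure_pmf (step_pmf n)).
      \<exists>b. stake (length block) (sdrop (b * length block) s) = block"
    by (rule AE_stream_space_pmf_block_eq)
  then have "AE \<omega> in game_space n R C.
      \<exists>b. stake (length fs) (sdrop (b * length fs) (snd \<omega>)) = block"
    unfolding game_space_def block_def length_map
    by (intro AE_pair_measure_snd prob_space_imp_sigma_finite prob_space_measure_pmf
        prob_space_stream_space_pmf) measurable
  then show ?thesis
  proof (rule eventually_mono)
    fix \<omega> :: "(nat \<Rightarrow> bool) \<times> (nat \<times> nat) stream"
    assume "\<exists>b. stake (length fs) (sdrop (b * length fs) (snd \<omega>)) = block"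
    then obtain b where "stake (length fs) (sdrop (b * length fs) (snd \<omega>)) = block" ..
    then have "\<forall>f\<in>followers n R C. opinion n R C \<omega> (b * length fs + length fs) f"
      using opinion_after_copy_block[OF c] set_fs by (simp add: block_def)
    then show "\<exists>t. decision_at n R C k \<omega> t"
      using decision_at_if_followers_agree[OF assms(1,6)] by blast
  qed
qed

end
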